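(* Let $X$ be a Banach space and $\{P_i\}_{i\in I}$ a family of (linear idempotent) projections on $X$. The following are equivalent: (a) $\{P_i\}_{i\in I}$ is uniformly convex, i.e. $\|P_i\|\le 1$ for every $i\in I$, and for every $\varepsilon>0$ there is $\delta(\varepsilon)>0$ such that $\|x-P_ix\|<\varepsilon$ for every $i\in I$ whenever $\|x\|=1$ and $\|x+P_ix\|>2-\delta(\varepsilon)$. (b) For every $\varepsilon>0$ there is $\delta(\varepsilon)>0$ such that $\|x-P_ix\|<\varepsilon$ for every $i\in I$ whenever $x\in B_X$ and $\|x\|-\|P_ix\|<\delta(\varepsilon)$. (c) For every $\varepsilon>0$ there is $\delta(\varepsilon)>0$ such that $\|x-P_ix\|<\varepsilon$ for every $i\in I$ whenever $\|x\|=1$ and $\|P_ix\|>1-\delta(\varepsilon)$. *)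

theory Defs
  imports "HOL-Analysis.Analysis"
begin

definition projection :: "('a::real_normed_vector \<Rightarrow> 'a) \<Rightarrow> bool" where
  "projection P \<longleftrightarrow> bounded_linear P \<and> P \<circ> P = P"

definition uniformly_convex_family ::
    "'i set \<Rightarrow> ('i \<Rightarrow> 'a::real_normed_vector \<Rightarrow> 'a) \<Rightarrow> bool" where
  "uniformly_convex_family I P \<longleftrightarrow>
     (\<forall>i\<in>I. onorm (P i) \<le> 1) \<and>
     (\<forall>\<epsilon>>0. \<exists>\<delta>>0. \<forall>i\<in>I. \<forall>x. norm x = 1 \<and> norm (x + P i x) > 2 - \<delta>
          \<longrightarrow> norm (x - P i x) < \<epsilon>)"

end

theory Submission
  imports Defs
begin

text \<open>
  Condition (c) already forces \<open>\<parallel>P i\<parallel> \<le> 1\<close>: a unit vector with \<open>\<parallel>P i x\<parallel> > 1\<close> would be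
  \<open>\<epsilon>\<close>-close to \<open>P i x\<close> for every \<open>\<epsilon>\<close>, hence fixed. For a contractive projection,
  \<open>2\<parallel>P i x\<parallel> = \<parallel>P i (x + P i x)\<parallel> \<le> \<parallel>x + P i x\<parallel> \<le> 1 + \<parallel>P i x\<parallel>\<close> on the sphere, so (a) and (c)
  differ only by halving \<open>\<delta>\<close>. Finally (b) reduces to (c) by homogeneity, vectors of norm
  below \<open>\<epsilon>/2\<close> being harmless because \<open>\<parallel>x - P i x\<parallel> \<le> 2\<parallel>x\<parallel>\<close>.
\<close>

definition nearly_fixing_sphere :: "'i set \<Rightarrow> ('i \<Rightarrow> 'a::real_normed_vector \<Rightarrow> 'a) \<Rightarrow> bool" where
  "nearly_fixing_sphere I P \<longleftrightarrow>
     (\<forall>\<epsilon>>0. \<exists>\<delta>>0. \<forall>i\<in>I. \<forall>x. norm x = 1 \<and> norm (P i x) > 1 - \<delta>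
        \<longrightarrow> norm (x - P i x) < \<epsilon>)"

definition nearly_fixing_ball :: "'i set \<Rightarrow> ('i \<Rightarrow> 'a::real_normed_vector \<Rightarrow> 'a) \<Rightarrow> bool" where
  "nearly_fixing_ball I P \<longleftrightarrow>
     (\<forall>\<epsilon>>0. \<exists>\<delta>>0. \<forall>i\<in>I. \<forall>x. norm x \<le> 1 \<and> norm x - norm (P i x) < \<delta>
        \<longrightarrow> norm (x - P i x) < \<epsilon>)"

lemma projection_bounded_linear: "projection Q \<Longrightarrow> bounded_linear Q"
  by (simp add: projection_def)

lemma projection_idem: "projection Q \<Longrightarrow> Q (Q x) = Q x"
  by (metis comp_apply projection_def)

lemma onorm_le_1_iff:
  assumes "bounded_linear f"
  shows "onorm f \<le> 1 \<longleftrightarrow> (\<forall>x. norm (f x) \<le> norm x)"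
proof
  assume "onorm f \<le> 1"
  show "\<forall>x. norm (f x) \<le> norm x"
  proof
    fix x
    have "norm (f x) \<le> onorm f * norm x"
      using assms by (rule onorm)
    also have "\<dots> \<le> norm x"
      using \<open>onorm f \<le> 1\<close> mult_right_mono[of "onorm f" 1 "norm x"] by simp
    finally show "norm (f x) \<le> norm x" .
  qed
next
  assume "\<forall>x. norm (f x) \<le> norm x"
  then show "onorm f \<le> 1"
    by (intro onorm_bound) auto
qed

lemma linear_norm_sgn:
  assumes "linear Q"
  shows "norm (Q x) = norm x * norm (Q (sgn x))"
    and "norm (x - Q x) = norm x * norm (sgn x - Q (sgn x))"
proof -
  interpret linear Q by fact
  have "Q x = norm x *\<^sub>R Q (sgn x)" and "x - Q x = norm x *\<^sub>R (sgn x - Q (sgn x))"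
    by (cases "x = 0"; simp add: sgn_div_norm scale scaleR_diff_right)+
  then show "norm (Q x) = norm x * norm (Q (sgn x))"
    and "norm (x - Q x) = norm x * norm (sgn x - Q (sgn x))"
    by simp_all
qed

lemma projection_double_norm_le:
  assumes "projection Q" and contractive: "\<And>y. norm (Q y) \<le> norm y"
  shows "2 * norm (Q x) \<le> norm (x + Q x)"
proof -
  interpret bounded_linear Q
    using assms(1) by (rule projection_bounded_linear)
  have "Q (x + Q x) = 2 *\<^sub>R Q x"
    using projection_idem[OF assms(1)] by (simp add: add scaleR_2)
  then show ?thesis
    using contractive[of "x + Q x"] by simp
qed

lemma nearly_fixing_sphere_contractive:
  assumes nearly: "nearly_fixing_sphere I P" and "i \<in> I" and lin: "linear (P i)"
  shows "norm (P i x) \<le> norm x"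
proof (rule ccontr)
  assume "\<not> norm (P i x) \<le> norm x"
  then have "norm x > 0"
    using linear_0[OF lin] by fastforce
  have "norm x * 1 < norm x * norm (P i (sgn x))"
    using \<open>\<not> norm (P i x) \<le> norm x\<close> linear_norm_sgn(1)[OF lin, of x] by simp
  then have "norm (P i (sgn x)) > 1"
    using \<open>norm x > 0\<close> by (simp only: mult_less_cancel_left_pos)
  moreover have "norm (sgn x) = 1"
    using \<open>norm x > 0\<close> by (simp add: norm_sgn)
  ultimately have u: "norm (P i (sgn x)) > 1" "norm (sgn x) = 1" .
  have "sgn x \<noteq> P i (sgn x)"
  proof
    assume "sgn x = P i (sgn x)"
    with u show False
      by simp
  qed
  then have "norm (sgn x - P i (sgn x)) > 0"
    by simp
  then obtain \<delta> where "\<delta> > 0" and "\<forall>u. norm u = 1 \<and> norm (P i u) > 1 - \<delta>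
      \<longrightarrow> norm (u - P i u) < norm (sgn x - P i (sgn x))"
    using nearly \<open>i \<in> I\<close> unfolding nearly_fixing_sphere_def by blast
  with u show False
    by force
qed

lemma uniformly_convex_family_imp_nearly_fixing_sphere:
  assumes proj: "\<forall>i\<in>I. projection (P i)" and convex: "uniformly_convex_family I P"
  shows "nearly_fixing_sphere I P"
  unfolding nearly_fixing_sphere_def
proof (intro allI impI)
  have double: "2 * norm (P i x) \<le> norm (x + P i x)" if "i \<in> I" for i x
    using convex proj that
    by (intro projection_double_norm_le)
      (auto simp: uniformly_convex_family_def onorm_le_1_iff projection_bounded_linear)
  fix \<epsilon> :: real
  assume "\<epsilon> > 0"
  then obtain \<delta> where "\<delta> > 0" and \<delta>: "\<forall>i\<in>I. \<forall>x. norm x = 1 \<and> norm (x + P i x) > 2 - \<delta>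
      \<longrightarrow> norm (x - P i x) < \<epsilon>"
    using convex unfolding uniformly_convex_family_def by blast
  have "norm (x - P i x) < \<epsilon>" if "i \<in> I" "norm x = 1" "norm (P i x) > 1 - \<delta> / 2" for i x
  proof -
    have "norm (x + P i x) > 2 - \<delta>"
      using double[of i x] that by linarith
    then show ?thesis
      using \<delta> that by blast
  qed
  then show "\<exists>\<delta>>0. \<forall>i\<in>I. \<forall>x. norm x = 1 \<and> norm (P i x) > 1 - \<delta> \<longrightarrow> norm (x - P i x) < \<epsilon>"
    using \<open>\<delta> > 0\<close> by (intro exI[of _ "\<delta> / 2"]) auto
qed

lemma nearly_fixing_sphere_imp_uniformly_convex_family:
  assumes lin: "\<forall>i\<in>I. bounded_linear (P i)" and nearly: "nearly_fixing_sphere I P"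
  shows "uniformly_convex_family I P"
  unfolding uniformly_convex_family_def
proof (intro conjI ballI allI impI)
  show "onorm (P i) \<le> 1" if "i \<in> I" for i
    using nearly_fixing_sphere_contractive[OF nearly that] lin that
    by (simp add: onorm_le_1_iff bounded_linear.linear)
  fix \<epsilon> :: real
  assume "\<epsilon> > 0"
  then obtain \<delta> where "\<delta> > 0" and \<delta>: "\<forall>i\<in>I. \<forall>x. norm x = 1 \<and> norm (P i x) > 1 - \<delta>
      \<longrightarrow> norm (x - P i x) < \<epsilon>"
    using nearly unfolding nearly_fixing_sphere_def by blast
  have "norm (x - P i x) < \<epsilon>" if "i \<in> I" "norm x = 1" "norm (x + P i x) > 2 - \<delta>" for i x
  proof -
    have "norm (P i x) > 1 - \<delta>"
      using norm_triangle_ineq[of x "P i x"] that by linarith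
    then show ?thesis
      using \<delta> that by blast
  qed
  then show "\<exists>\<delta>>0. \<forall>i\<in>I. \<forall>x. norm x = 1 \<and> norm (x + P i x) > 2 - \<delta> \<longrightarrow> norm (x - P i x) < \<epsilon>"
    using \<open>\<delta> > 0\<close> by blast
qed

lemma nearly_fixing_ball_imp_sphere:
  assumes "nearly_fixing_ball I P"
  shows "nearly_fixing_sphere I P"
  unfolding nearly_fixing_sphere_def
proof (intro allI impI)
  fix \<epsilon> :: real
  assume "\<epsilon> > 0"
  then obtain \<delta> where "\<delta> > 0" and "\<forall>i\<in>I. \<forall>x. norm x \<le> 1 \<and> norm x - norm (P i x) < \<delta>
      \<longrightarrow> norm (x - P i x) < \<epsilon>"
    using assms unfolding nearly_fixing_ball_def by blast
  then show "\<exists>\<delta>>0. \<forall>i\<in>I. \<forall>x. norm x = 1 \<and> norm (P i x) > 1 - \<delta> \<longrightarrow> norm (x - P i x) < \<epsilon>"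
    by (intro exI[of _ \<delta>]) auto
qed

lemma nearly_fixing_sphere_imp_ball:
  assumes lin: "\<forall>i\<in>I. linear (P i)" and nearly: "nearly_fixing_sphere I P"
  shows "nearly_fixing_ball I P"
  unfolding nearly_fixing_ball_def
proof (intro allI impI)
  fix \<epsilon> :: real
  assume "\<epsilon> > 0"
  then obtain \<delta> where "\<delta> > 0" and \<delta>: "\<forall>i\<in>I. \<forall>u. norm u = 1 \<and> norm (P i u) > 1 - \<delta>
      \<longrightarrow> norm (u - P i u) < \<epsilon>"
    using nearly unfolding nearly_fixing_sphere_def by blast
  have "norm (x - P i x) < \<epsilon>"
    if "i \<in> I" and x: "norm x \<le> 1" "norm x - norm (P i x) < \<delta> * \<epsilon> / 2" for i x
  proof (cases "norm x < \<epsilon> / 2")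
    case True
    have "norm (x - P i x) \<le> norm x + norm (P i x)"
      by (rule norm_triangle_ineq4)
    also have "\<dots> \<le> 2 * norm x"
      using nearly_fixing_sphere_contractive[OF nearly \<open>i \<in> I\<close>, of x] lin \<open>i \<in> I\<close> by simp
    finally show ?thesis
      using True by simp
  next
    case False
    have lin_i: "linear (P i)"
      using lin \<open>i \<in> I\<close> by blast
    have "norm x > 0"
      using False \<open>\<epsilon> > 0\<close> by linarith
    have "\<delta> * \<epsilon> / 2 \<le> \<delta> * norm x"
      using False \<open>\<delta> > 0\<close> by simp
    then have "norm x - \<delta> * norm x < norm x * norm (P i (sgn x))"
      using x(2) linear_norm_sgn(1)[OF lin_i, of x] by linarith
    then have "norm x * (1 - \<delta>) < norm x * norm (P i (sgn x))"
      by (simp add: algebra_simps)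
    then have "norm (P i (sgn x)) > 1 - \<delta>"
      using \<open>norm x > 0\<close> by (simp only: mult_less_cancel_left_pos)
    moreover have "norm (sgn x) = 1"
      using \<open>norm x > 0\<close> by (simp add: norm_sgn)
    ultimately have "norm (sgn x - P i (sgn x)) < \<epsilon>"
      using \<delta> \<open>i \<in> I\<close> by blast
    have "norm (x - P i x) = norm x * norm (sgn x - P i (sgn x))"
      by (rule linear_norm_sgn(2)[OF lin_i])
    also have "\<dots> \<le> norm (sgn x - P i (sgn x))"
      using x(1) by (simp add: mult_left_le_one_le)
    also have "\<dots> < \<epsilon>"
      by fact
    finally show ?thesis .
  qed
  then show "\<exists>\<delta>>0. \<forall>i\<in>I. \<forall>x. norm x \<le> 1 \<and> norm x - norm (P i x) < \<delta> \<longrightarrow> norm (x - P i x) < \<epsilon>"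
    using \<open>\<delta> > 0\<close> \<open>\<epsilon> > 0\<close> by (intro exI[of _ "\<delta> * \<epsilon> / 2"]) auto
qed

theorem theorem3p5:
  fixes I :: "'i set" and P :: "'i \<Rightarrow> 'a::banach \<Rightarrow> 'a"
  assumes "\<forall>i\<in>I. projection (P i)"
  shows "(uniformly_convex_family I P
            \<longleftrightarrow> (\<forall>\<epsilon>>0. \<exists>\<delta>>0. \<forall>i\<in>I. \<forall>x. norm x \<le> 1 \<and> norm x - norm (P i x) < \<delta>
                    \<longrightarrow> norm (x - P i x) < \<epsilon>))
       \<and> (uniformly_convex_family I P
            \<longleftrightarrow> (\<forall>\<epsilon>>0. \<exists>\<delta>>0. \<forall>i\<in>I. \<forall>x. norm x = 1 \<and> norm (P i x) > 1 - \<delta>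
                    \<longrightarrow> norm (x - P i x) < \<epsilon>))"
proof -
  have bounded: "\<forall>i\<in>I. bounded_linear (P i)"
    using assms by (simp add: projection_bounded_linear)
  then have "\<forall>i\<in>I. linear (P i)"
    by (simp add: bounded_linear.linear)
  then have "nearly_fixing_ball I P \<longleftrightarrow> nearly_fixing_sphere I P"
    using nearly_fixing_ball_imp_sphere nearly_fixing_sphere_imp_ball by blast
  moreover have "uniformly_convex_family I P \<longleftrightarrow> nearly_fixing_sphere I P"
    using uniformly_convex_family_imp_nearly_fixing_sphere[OF assms]
      nearly_fixing_sphere_imp_uniformly_convex_family[OF bounded] by blast
  ultimately show ?thesis
    unfolding nearly_fixing_ball_def nearly_fixing_sphere_def by argo
qed

end
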